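(* In the Heisenberg–Weyl algebra $\mathcal A$, for all integers $0\le k\le n$ one has $q^{k}p^{n}q^{n-k} = p^{n-k}q^{n}p^{k}$.
   Context: $\mathcal{A}$ denotes the quotient of the free associative $\mathbb{C}$-algebra on two noncommuting generators $p,q$ by the two-sided ideal generated by $qp-pq-\imath$, where $\imath=\sqrt{-1}$. *)

theory Defs
  imports Complex_Main
begin

text \<open>Free associative C-algebra on two generators: finitely supported
  functions from words (bool lists; False = p, True = q) to complex numbers,
  with concatenation-convolution product.\<close>

type_synonym fa = "bool list \<Rightarrow> complex"

definition fin_supp :: "fa \<Rightarrow> bool" where
  "fin_supp f \<longleftrightarrow> finite {w. f w \<noteq> 0}"

definition fa_add :: "fa \<Rightarrow> fa \<Rightarrow> fa" where
  "fa_add f g = (\<lambda>w. f w + g w)"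

definition fa_sub :: "fa \<Rightarrow> fa \<Rightarrow> fa" where
  "fa_sub f g = (\<lambda>w. f w - g w)"

definition fa_smult :: "complex \<Rightarrow> fa \<Rightarrow> fa" where
  "fa_smult c f = (\<lambda>w. c * f w)"

definition fa_mult :: "fa \<Rightarrow> fa \<Rightarrow> fa" where
  "fa_mult f g = (\<lambda>w. \<Sum>i\<le>length w. f (take i w) * g (drop i w))"

definition word :: "bool list \<Rightarrow> fa" where
  "word u = (\<lambda>w. if w = u then 1 else 0)"

definition fa_one :: fa where "fa_one = word []"

definition fa_pow :: "fa \<Rightarrow> nat \<Rightarrow> fa" where
  "fa_pow f n = ((fa_mult f) ^^ n) fa_one"

definition gen_p :: fa where "gen_p = word [False]"
definition gen_q :: fa where "gen_q = word [True]"

definition hw_rel :: fa where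
  "hw_rel = fa_sub (fa_sub (fa_mult gen_q gen_p) (fa_mult gen_p gen_q)) (fa_smult \<i> fa_one)"

inductive_set hw_ideal :: "fa set" where
  gen: "hw_rel \<in> hw_ideal"
| zero: "(\<lambda>w. 0) \<in> hw_ideal"
| add: "x \<in> hw_ideal \<Longrightarrow> y \<in> hw_ideal \<Longrightarrow> fa_add x y \<in> hw_ideal"
| lmult: "fin_supp a \<Longrightarrow> x \<in> hw_ideal \<Longrightarrow> fa_mult a x \<in> hw_ideal"
| rmult: "fin_supp a \<Longrightarrow> x \<in> hw_ideal \<Longrightarrow> fa_mult x a \<in> hw_ideal"

definition hw_eq :: "fa \<Rightarrow> fa \<Rightarrow> bool" where
  "hw_eq x y \<longleftrightarrow> fa_sub x y \<in> hw_ideal"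

end

theory Submission
  imports Defs
begin

text \<open>In any ring in which \<open>c = q p - p q\<close> commutes with \<open>p\<close> and \<open>q\<close>, put
  \<open>D = p q\<close>. Then \<open>q D = (D + c) q\<close> and \<open>p D = (D - c) p\<close>, so by induction
  \<open>q\<^sup>k p\<^sup>k\<close> and \<open>p\<^sup>m q\<^sup>m\<close> are polynomials in \<open>D\<close> and \<open>c\<close>;
  in particular they commute. With \<open>n = k + m\<close> this gives
  \<open>q\<^sup>k p\<^sup>n q\<^sup>m = (q\<^sup>k p\<^sup>k)(p\<^sup>m q\<^sup>m) = (p\<^sup>m q\<^sup>m)(q\<^sup>k p\<^sup>k) = p\<^sup>m q\<^sup>n p\<^sup>k\<close>.
  The Heisenberg--Weyl algebra is such a ring, with \<open>c = \<i>\<close> central.\<close>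

text \<open>The class \<open>{ring, monoid_mult}\<close> rather than \<open>ring_1\<close> is used throughout, so that
  the quotient algebra need not be shown to satisfy \<open>0 \<noteq> 1\<close>.\<close>

inductive_set subring_gen :: "'a::{ring,monoid_mult} set \<Rightarrow> 'a set" for S where
  gen: "x \<in> S \<Longrightarrow> x \<in> subring_gen S"
| one: "1 \<in> subring_gen S"
| add: "x \<in> subring_gen S \<Longrightarrow> y \<in> subring_gen S \<Longrightarrow> x + y \<in> subring_gen S"
| diff: "x \<in> subring_gen S \<Longrightarrow> y \<in> subring_gen S \<Longrightarrow> x - y \<in> subring_gen S"
| mult: "x \<in> subring_gen S \<Longrightarrow> y \<in> subring_gen S \<Longrightarrow> x * y \<in> subring_gen S"

lemma subring_gen_commute_with:
  assumes "\<And>g. g \<in> S \<Longrightarrow> a * g = g * a"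
  shows "x \<in> subring_gen S \<Longrightarrow> a * x = x * a"
proof (induction rule: subring_gen.induct)
  case (mult x y)
  then show ?case by (metis mult.assoc)
qed (auto simp: assms algebra_simps)

lemma subring_gen_commute:
  assumes "\<And>g h. g \<in> S \<Longrightarrow> h \<in> S \<Longrightarrow> g * h = h * g"
    and "x \<in> subring_gen S" "y \<in> subring_gen S"
  shows "x * y = y * x"
  using assms(2)
proof (induction rule: subring_gen.induct)
  case (gen g)
  then show ?case by (metis assms(1,3) subring_gen_commute_with)
next
  case (mult x1 x2)
  then show ?case by (metis mult.assoc)
qed (auto simp: algebra_simps)

lemma subring_gen_intertwine:
  assumes "\<And>g. g \<in> S \<Longrightarrow> \<exists>h \<in> subring_gen S. s * g = h * s"
  shows "x \<in> subring_gen S \<Longrightarrow> \<exists>y \<in> subring_gen S. s * x = y * s"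
proof (induction rule: subring_gen.induct)
  case (gen g)
  then show ?case by (rule assms)
next
  case one
  show ?case by (rule bexI[of _ 1]) (simp_all add: subring_gen.one)
next
  case (add x1 x2)
  then obtain y1 y2 where "y1 \<in> subring_gen S" "y2 \<in> subring_gen S"
    and "s * x1 = y1 * s" "s * x2 = y2 * s"
    by blast
  then show ?case by (intro bexI[of _ "y1 + y2"]) (auto simp: algebra_simps intro: subring_gen.add)
next
  case (diff x1 x2)
  then obtain y1 y2 where "y1 \<in> subring_gen S" "y2 \<in> subring_gen S"
    and "s * x1 = y1 * s" "s * x2 = y2 * s"
    by blast
  then show ?case by (intro bexI[of _ "y1 - y2"]) (auto simp: algebra_simps intro: subring_gen.diff)
next
  case (mult x1 x2)
  then obtain y1 y2 where "y1 \<in> subring_gen S" "y2 \<in> subring_gen S"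
    and "s * x1 = y1 * s" "s * x2 = y2 * s"
    by blast
  then show ?case by (intro bexI[of _ "y1 * y2"]) (auto intro: subring_gen.mult, metis mult.assoc)
qed

lemma power_mult_power_in_subring_gen:
  assumes "a * b \<in> subring_gen S" and "\<And>g. g \<in> S \<Longrightarrow> \<exists>h \<in> subring_gen S. a * g = h * a"
  shows "a ^ j * b ^ j \<in> subring_gen S"
proof (induction j)
  case 0
  show ?case by (simp add: subring_gen.one)
next
  case (Suc j)
  then obtain y where y: "y \<in> subring_gen S" "a * (a ^ j * b ^ j) = y * a"
    using subring_gen_intertwine[OF assms(2)] by blast
  have "a ^ Suc j * b ^ Suc j = a * (a ^ j * b ^ j) * b"
    by (simp add: power_commutes mult.assoc)
  also have "\<dots> = y * (a * b)"
    using y by (simp add: mult.assoc)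
  finally show ?case
    using y assms(1) by (simp add: subring_gen.mult)
qed

lemma canonical_commutation_power_identity:
  fixes p q c :: "'a::{ring,monoid_mult}"
  assumes rel: "q * p - p * q = c" and cp: "c * p = p * c" and cq: "c * q = q * c"
    and "k \<le> n"
  shows "q ^ k * p ^ n * q ^ (n - k) = p ^ (n - k) * q ^ n * p ^ k"
proof -
  define D where "D = p * q"
  let ?R = "subring_gen {D, c}"
  have qp: "q * p = D + c"
    using rel unfolding D_def by (simp add: algebra_simps)
  have qD: "q * D = (D + c) * q"
    using qp unfolding D_def by (metis mult.assoc)
  have pD: "p * D = (D - c) * p"
  proof -
    have "(D - c) * p = p * (q * p) - p * c"
      by (simp add: D_def cp algebra_simps)
    also have "\<dots> = p * D"
      by (simp add: qp algebra_simps)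
    finally show ?thesis ..
  qed
  have Dc: "D * c = c * D"
    unfolding D_def by (metis cp cq mult.assoc)
  have R_commute: "x * y = y * x" if "x \<in> ?R" "y \<in> ?R" for x y
    by (rule subring_gen_commute[OF _ that]) (auto simp: Dc)
  have D_R: "D \<in> ?R" and c_R: "c \<in> ?R"
    by (simp_all add: subring_gen.gen)
  have "q ^ k * p ^ k \<in> ?R"
  proof (rule power_mult_power_in_subring_gen)
    show "q * p \<in> ?R" using D_R c_R by (simp add: qp subring_gen.add)
    show "\<exists>h \<in> ?R. q * g = h * q" if "g \<in> {D, c}" for g
      using that D_R c_R qD cq[symmetric] by (auto intro: subring_gen.add)
  qed
  moreover have "p ^ m * q ^ m \<in> ?R" for m
  proof (rule power_mult_power_in_subring_gen)
    show "p * q \<in> ?R" using D_R by (simp add: D_def)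
    show "\<exists>h \<in> ?R. p * g = h * p" if "g \<in> {D, c}" for g
      using that D_R c_R pD cp[symmetric] by (auto intro: subring_gen.diff)
  qed
  moreover obtain m where n: "n = k + m"
    using \<open>k \<le> n\<close> le_Suc_ex by blast
  ultimately have "(q ^ k * p ^ k) * (p ^ m * q ^ m) = (p ^ m * q ^ m) * (q ^ k * p ^ k)"
    using R_commute by blast
  moreover have "q ^ n = q ^ m * q ^ k"
    by (simp add: n power_add[symmetric] add.commute)
  ultimately show ?thesis
    by (simp add: n power_add mult.assoc)
qed

lemma sum_triangle_swap:
  fixes G :: "nat \<Rightarrow> nat \<Rightarrow> 'a::comm_monoid_add"
  shows "(\<Sum>i\<le>n. \<Sum>j\<le>i. G j i) = (\<Sum>j\<le>n. \<Sum>i=j..n. G j i)"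
  by (induction n) (simp_all add: sum.distrib)

lemma fa_mult_assoc: "fa_mult (fa_mult f g) h = fa_mult f (fa_mult g h)"
proof
  fix w :: "bool list"
  let ?n = "length w"
  let ?G = "\<lambda>j i. f (take j w) * g (drop j (take i w)) * h (drop i w)"
  have "fa_mult (fa_mult f g) h w = (\<Sum>i\<le>?n. \<Sum>j\<le>i. ?G j i)"
    unfolding fa_mult_def by (rule sum.cong) (auto simp: sum_distrib_right min_def)
  also have "\<dots> = (\<Sum>j\<le>?n. \<Sum>i=j..?n. ?G j i)"
    by (rule sum_triangle_swap)
  also have "\<dots> = fa_mult f (fa_mult g h) w"
    unfolding fa_mult_def
  proof (rule sum.cong[OF refl])
    fix j assume "j \<in> {..?n}"
    then have "(\<Sum>i=j..?n. ?G j i) = (\<Sum>l=0..?n-j. ?G j (l + j))"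
      using sum.shift_bounds_cl_nat_ivl[of "?G j" 0 j "?n - j"] by simp
    also have "\<dots> = f (take j w) *
        (\<Sum>l\<le>length (drop j w). g (take l (drop j w)) * h (drop l (drop j w)))"
      by (auto simp: sum_distrib_left take_drop add.commute mult.assoc atLeast0AtMost
          intro: sum.cong)
    finally show "(\<Sum>i=j..?n. ?G j i) = \<dots>" .
  qed
  finally show "fa_mult (fa_mult f g) h w = fa_mult f (fa_mult g h) w" .
qed

lemma fa_mult_add_left: "fa_mult (fa_add f g) h = fa_add (fa_mult f h) (fa_mult g h)"
  by (auto simp: fa_mult_def fa_add_def sum.distrib algebra_simps)

lemma fa_mult_add_right: "fa_mult h (fa_add f g) = fa_add (fa_mult h f) (fa_mult h g)"
  by (auto simp: fa_mult_def fa_add_def sum.distrib algebra_simps)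

lemma fa_mult_sub_left: "fa_mult (fa_sub f g) h = fa_sub (fa_mult f h) (fa_mult g h)"
  by (auto simp: fa_mult_def fa_sub_def sum_subtractf algebra_simps)

lemma fa_mult_sub_right: "fa_mult h (fa_sub f g) = fa_sub (fa_mult h f) (fa_mult h g)"
  by (auto simp: fa_mult_def fa_sub_def sum_subtractf algebra_simps)

lemma fa_mult_smult_left: "fa_mult (fa_smult c f) g = fa_smult c (fa_mult f g)"
  by (auto simp: fa_mult_def fa_smult_def sum_distrib_left algebra_simps)

lemma fa_mult_smult_right: "fa_mult f (fa_smult c g) = fa_smult c (fa_mult f g)"
  by (auto simp: fa_mult_def fa_smult_def sum_distrib_left algebra_simps)

lemma fa_mult_one_left: "fa_mult fa_one f = f"
proof
  fix w :: "bool list"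
  have "fa_mult fa_one f w = (\<Sum>i\<le>length w. if i = 0 then f w else 0)"
    unfolding fa_mult_def fa_one_def word_def by (rule sum.cong) auto
  then show "fa_mult fa_one f w = f w" by simp
qed

lemma fa_mult_one_right: "fa_mult f fa_one = f"
proof
  fix w :: "bool list"
  have "fa_mult f fa_one w = (\<Sum>i\<le>length w. if i = length w then f w else 0)"
    unfolding fa_mult_def fa_one_def word_def by (rule sum.cong) auto
  then show "fa_mult f fa_one w = f w" by simp
qed

lemma fin_supp_zero [simp]: "fin_supp (\<lambda>w. 0)"
  by (simp add: fin_supp_def)

lemma fin_supp_word [simp]: "fin_supp (word u)"
  by (simp add: fin_supp_def word_def)

lemma fin_supp_one [simp]: "fin_supp fa_one"
  by (simp add: fa_one_def)

lemma fin_supp_add [simp]: "fin_supp f \<Longrightarrow> fin_supp g \<Longrightarrow> fin_supp (fa_add f g)"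
  unfolding fin_supp_def fa_add_def
  by (rule finite_subset[of _ "{w. f w \<noteq> 0} \<union> {w. g w \<noteq> 0}"]) auto

lemma fin_supp_sub [simp]: "fin_supp f \<Longrightarrow> fin_supp g \<Longrightarrow> fin_supp (fa_sub f g)"
  unfolding fin_supp_def fa_sub_def
  by (rule finite_subset[of _ "{w. f w \<noteq> 0} \<union> {w. g w \<noteq> 0}"]) auto

lemma fin_supp_smult [simp]: "fin_supp f \<Longrightarrow> fin_supp (fa_smult c f)"
  unfolding fin_supp_def fa_smult_def
  by (rule finite_subset[of _ "{w. f w \<noteq> 0}"]) auto

lemma fin_supp_mult [simp]:
  assumes "fin_supp f" "fin_supp g"
  shows "fin_supp (fa_mult f g)"
proof -
  have "{w. fa_mult f g w \<noteq> 0} \<subseteq> (\<lambda>(u, v). u @ v) ` ({u. f u \<noteq> 0} \<times> {v. g v \<noteq> 0})"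
  proof
    fix w assume "w \<in> {w. fa_mult f g w \<noteq> 0}"
    then obtain i where "f (take i w) * g (drop i w) \<noteq> 0"
      unfolding fa_mult_def by (auto elim: sum.not_neutral_contains_not_neutral)
    then show "w \<in> (\<lambda>(u, v). u @ v) ` ({u. f u \<noteq> 0} \<times> {v. g v \<noteq> 0})"
      by (auto intro!: image_eqI[of _ _ "(take i w, drop i w)"])
  qed
  then show ?thesis
    using assms unfolding fin_supp_def by (auto intro: finite_subset)
qed

lemma fa_pow_0 [simp]: "fa_pow f 0 = fa_one"
  by (simp add: fa_pow_def)

lemma fa_pow_Suc [simp]: "fa_pow f (Suc n) = fa_mult f (fa_pow f n)"
  by (simp add: fa_pow_def)

lemma fin_supp_pow [simp]: "fin_supp f \<Longrightarrow> fin_supp (fa_pow f n)"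
  by (induction n) simp_all

lemma hw_ideal_smult: "x \<in> hw_ideal \<Longrightarrow> fa_smult c x \<in> hw_ideal"
  using hw_ideal.lmult[of "fa_smult c fa_one" x]
  by (simp add: fa_mult_smult_left fa_mult_one_left)

lemma hw_ideal_sub: "x \<in> hw_ideal \<Longrightarrow> y \<in> hw_ideal \<Longrightarrow> fa_sub x y \<in> hw_ideal"
  using hw_ideal.add[of x "fa_smult (-1) y"] hw_ideal_smult[of y "-1"]
  by (simp add: fa_add_def fa_smult_def fa_sub_def)

text \<open>The ideal absorbs only finitely supported factors, so the quotient is taken
  over finitely supported elements (a partial equivalence).\<close>
definition hw_equiv :: "fa \<Rightarrow> fa \<Rightarrow> bool" where
  "hw_equiv x y \<longleftrightarrow> fin_supp x \<and> fin_supp y \<and> hw_eq x y"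

lemma hw_equiv_refl_iff [simp]: "hw_equiv x x \<longleftrightarrow> fin_supp x"
  by (simp add: hw_equiv_def hw_eq_def fa_sub_def hw_ideal.zero)

lemma hw_equiv_eqI: "fin_supp x \<Longrightarrow> x = y \<Longrightarrow> hw_equiv x y"
  by simp

lemma part_equivp_hw_equiv: "part_equivp hw_equiv"
proof (rule part_equivpI)
  show "\<exists>x. hw_equiv x x"
    using fin_supp_zero hw_equiv_refl_iff by blast
  show "symp hw_equiv"
  proof (rule sympI)
    fix x y assume "hw_equiv x y"
    moreover have "fa_sub y x = fa_smult (-1) (fa_sub x y)"
      by (auto simp: fa_smult_def fa_sub_def)
    ultimately show "hw_equiv y x"
      by (auto simp: hw_equiv_def hw_eq_def intro: hw_ideal_smult)
  qed
  show "transp hw_equiv"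
  proof (rule transpI)
    fix x y z assume "hw_equiv x y" "hw_equiv y z"
    moreover have "fa_sub x z = fa_add (fa_sub x y) (fa_sub y z)"
      by (auto simp: fa_add_def fa_sub_def)
    ultimately show "hw_equiv x z"
      by (auto simp: hw_equiv_def hw_eq_def intro: hw_ideal.add)
  qed
qed

quotient_type hw = fa / partial: hw_equiv
  by (rule part_equivp_hw_equiv)

instantiation hw :: "{ring, monoid_mult}"
begin

lift_definition zero_hw :: hw is "\<lambda>w. 0"
  by simp

lift_definition one_hw :: hw is fa_one
  by simp

lift_definition plus_hw :: "hw \<Rightarrow> hw \<Rightarrow> hw" is fa_add
proof -
  fix x x' y y' assume "hw_equiv x x'" "hw_equiv y y'"
  moreover have "fa_sub (fa_add x y) (fa_add x' y') = fa_add (fa_sub x x') (fa_sub y y')"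
    by (auto simp: fa_add_def fa_sub_def)
  ultimately show "hw_equiv (fa_add x y) (fa_add x' y')"
    by (auto simp: hw_equiv_def hw_eq_def intro: hw_ideal.add)
qed

lift_definition minus_hw :: "hw \<Rightarrow> hw \<Rightarrow> hw" is fa_sub
proof -
  fix x x' y y' assume "hw_equiv x x'" "hw_equiv y y'"
  moreover have "fa_sub (fa_sub x y) (fa_sub x' y') = fa_sub (fa_sub x x') (fa_sub y y')"
    by (auto simp: fa_sub_def)
  ultimately show "hw_equiv (fa_sub x y) (fa_sub x' y')"
    by (auto simp: hw_equiv_def hw_eq_def intro: hw_ideal_sub)
qed

lift_definition uminus_hw :: "hw \<Rightarrow> hw" is "fa_smult (-1)"
proof -
  fix x x' assume "hw_equiv x x'"
  moreover have "fa_sub (fa_smult (-1) x) (fa_smult (-1) x') = fa_smult (-1) (fa_sub x x')"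
    by (auto simp: fa_sub_def fa_smult_def)
  ultimately show "hw_equiv (fa_smult (-1) x) (fa_smult (-1) x')"
    by (auto simp: hw_equiv_def hw_eq_def intro: hw_ideal_smult)
qed

lift_definition times_hw :: "hw \<Rightarrow> hw \<Rightarrow> hw" is fa_mult
proof -
  fix x x' y y' assume "hw_equiv x x'" "hw_equiv y y'"
  moreover have "fa_sub (fa_mult x y) (fa_mult x' y') =
      fa_add (fa_mult (fa_sub x x') y) (fa_mult x' (fa_sub y y'))"
    by (simp only: fa_mult_sub_left fa_mult_sub_right) (auto simp: fa_sub_def fa_add_def)
  ultimately show "hw_equiv (fa_mult x y) (fa_mult x' y')"
    by (auto simp: hw_equiv_def hw_eq_def intro: hw_ideal.add hw_ideal.lmult hw_ideal.rmult)
qed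

instance
proof
  fix a b c :: hw
  show "a * b * c = a * (b * c)"
    by transfer (simp add: fa_mult_assoc)
  show "1 * a = a"
    by transfer (simp add: fa_mult_one_left)
  show "a * 1 = a"
    by transfer (simp add: fa_mult_one_right)
  show "(a + b) * c = a * c + b * c"
    by transfer (simp add: fa_mult_add_left)
  show "a * (b + c) = a * b + a * c"
    by transfer (simp add: fa_mult_add_right)
  show "a + b + c = a + (b + c)"
    by transfer (rule hw_equiv_eqI, simp, simp add: fa_add_def add.assoc)
  show "a + b = b + a"
    by transfer (rule hw_equiv_eqI, simp, simp add: fa_add_def add.commute)
  show "0 + a = a"
    by transfer (rule hw_equiv_eqI, simp, simp add: fa_add_def)
  show "- a + a = 0"
    by transfer (rule hw_equiv_eqI, simp, simp add: fa_add_def fa_smult_def)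
  show "a - b = a + - b"
    by transfer (rule hw_equiv_eqI, simp, simp add: fa_add_def fa_sub_def fa_smult_def)
qed

end

lemma abs_hw_mult:
  "fin_supp x \<Longrightarrow> fin_supp y \<Longrightarrow> abs_hw (fa_mult x y) = abs_hw x * abs_hw y"
  by (simp add: times_hw.abs_eq)

lemma abs_hw_pow: "fin_supp f \<Longrightarrow> abs_hw (fa_pow f n) = abs_hw f ^ n"
  by (induction n) (simp_all add: one_hw.abs_eq abs_hw_mult)

lemma abs_hw_eq_iff:
  "fin_supp x \<Longrightarrow> fin_supp y \<Longrightarrow> abs_hw x = abs_hw y \<longleftrightarrow> hw_eq x y"
  using Quotient3_rel[OF Quotient3_hw, of x y] by (simp add: hw_equiv_def)

lemma abs_hw_scalar_commute: "abs_hw (fa_smult a fa_one) * x = x * abs_hw (fa_smult a fa_one)"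
  by (induction x rule: hw.abs_induct)
     (simp add: times_hw.abs_eq fa_mult_smult_left fa_mult_smult_right
        fa_mult_one_left fa_mult_one_right)

lemma fin_supp_gen_p [simp]: "fin_supp gen_p"
  by (simp add: gen_p_def)

lemma fin_supp_gen_q [simp]: "fin_supp gen_q"
  by (simp add: gen_q_def)

lemma hw_commutation_relation:
  "abs_hw gen_q * abs_hw gen_p - abs_hw gen_p * abs_hw gen_q = abs_hw (fa_smult \<i> fa_one)"
proof -
  have "hw_eq (fa_sub (fa_mult gen_q gen_p) (fa_mult gen_p gen_q)) (fa_smult \<i> fa_one)"
    using hw_ideal.gen by (simp add: hw_eq_def hw_rel_def)
  then show ?thesis
    by (simp add: abs_hw_eq_iff[symmetric] minus_hw.abs_eq[symmetric] abs_hw_mult)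
qed

theorem corollary2p6:
  fixes k n :: nat
  assumes "k \<le> n"
  shows "hw_eq (fa_mult (fa_mult (fa_pow gen_q k) (fa_pow gen_p n)) (fa_pow gen_q (n - k)))
               (fa_mult (fa_mult (fa_pow gen_p (n - k)) (fa_pow gen_q n)) (fa_pow gen_p k))"
proof -
  have "abs_hw gen_q ^ k * abs_hw gen_p ^ n * abs_hw gen_q ^ (n - k) =
      abs_hw gen_p ^ (n - k) * abs_hw gen_q ^ n * abs_hw gen_p ^ k"
    by (rule canonical_commutation_power_identity[OF hw_commutation_relation
          abs_hw_scalar_commute abs_hw_scalar_commute assms])
  then show ?thesis
    by (simp add: abs_hw_eq_iff[symmetric] abs_hw_mult abs_hw_pow)
qed

end
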